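(* For every integer $b\geq 1$, $$\sum_{n\geq 1}\frac{H_n}{(2n+1)^{4b+1}}=-2\lambda(4b+1)\ln 2+\Big(2b+\frac12\Big)\lambda(4b+2)-\lambda(2b+1)^2-2\sum_{q=1}^{b-1}\lambda(2q+1)\lambda(4b-2q+1),$$ where an empty sum equals $0$.
   Context: $H_n=1+\frac12+\cdots+\frac1n$ is the $n$-th harmonic number. For real $s>1$, $\lambda(s)=\sum_{n\geq 1}\frac{1}{(2n-1)^s}=(1-2^{-s})\zeta(s)$. *)

theory Defs
  imports "HOL-Analysis.Analysis"
begin

text \<open>Dirichlet lambda function lambda(s) = sum over n >= 1 of 1/(2n-1)^s, for real s > 1
  (here only needed at integer arguments). Index shifted: k = n - 1 >= 0.\<close>
definition dlambda :: "real \<Rightarrow> real" where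
  "dlambda s = (\<Sum>k. 1 / (2 * real k + 1) powr s)"

end

theory Submission
  imports Defs
begin

text \<open>
  Write \<open>H\<^sub>n = \<Sum>\<^sub>k (1/(k+1) - 1/(k+n+1))\<close> and exchange the order of summation. Since
  \<open>k+n+1 = ((2n+1) + (2k+1))/2\<close>, partial fractions in \<open>2n+1\<close> turn each inner series into values of
  \<open>\<lambda>\<close> plus the series \<open>\<Sum>\<^sub>n (1/(2n+1) - 1/(2n+2k+2)) = H\<^sub>k/2 + ln 2\<close>; summed over \<open>k\<close>, the latter brings back
  the original series, and the resulting identity is solved for it. For odd \<open>p\<close> this gives
  \<open>\<Sum> H\<^sub>n/(2n+1)\<^sup>p = -2 ln 2 \<lambda>(p) - \<Sum>\<^bsub>i=1..p-2\<^esub> (-1)\<^sup>i \<lambda>(i+1) \<lambda>(p-i)\<close>.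
  The products of two even-argument values are summed in closed form,
  \<open>\<Sum>\<^bsub>j<M\<^esub> \<lambda>(2j+2) \<lambda>(2M-2j) = (M + 1/2) \<lambda>(2M+2)\<close>, by evaluating the double series of
  \<open>1/((x\<^sup>2 - y\<^sup>2) y\<^bsup>2M\<^esup>)\<close> over distinct odd \<open>x, y\<close> in both orders. For \<open>p = 4b+1\<close> the remaining
  odd-argument products pair up symmetrically around \<open>\<lambda>(2b+1)\<^sup>2\<close>.
\<close>

definition odd_real :: "nat \<Rightarrow> real" where
  "odd_real n = 2 * real n + 1"

definition lambda_nat :: "nat \<Rightarrow> real" where
  "lambda_nat s = (\<Sum>n. 1 / odd_real n ^ s)"

lemma odd_real_pos [simp]: "odd_real n > 0"
  and odd_real_nonzero [simp]: "odd_real n \<noteq> 0"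
  by (simp_all add: odd_real_def)

lemma odd_real_ge_1: "odd_real n \<ge> 1"
  by (simp add: odd_real_def)

lemma odd_real_inj: "odd_real m = odd_real n \<longleftrightarrow> m = n"
  by (simp add: odd_real_def)

lemma dlambda_of_nat: "dlambda (real s) = lambda_nat s"
  unfolding dlambda_def lambda_nat_def odd_real_def
  by (intro suminf_cong) (simp add: powr_realpow)

lemma summable_inverse_odd_real_power:
  assumes "s \<ge> 2"
  shows "summable (\<lambda>n. 1 / odd_real n ^ s)"
proof (rule summable_comparison_test[OF _ inverse_power_summable[OF assms]])
  have "norm (1 / odd_real n ^ s) \<le> inverse (real n ^ s)" if "n \<ge> 1" for n
  proof -
    have "real n ^ s \<le> odd_real n ^ s"
      by (intro power_mono) (auto simp: odd_real_def)
    then show ?thesis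
      using that by (simp add: inverse_eq_divide frac_le)
  qed
  then show "\<exists>N. \<forall>n\<ge>N. norm (1 / odd_real n ^ s) \<le> inverse (real n ^ s)"
    by blast
qed

lemma sums_lambda_nat: "s \<ge> 2 \<Longrightarrow> (\<lambda>n. 1 / odd_real n ^ s) sums lambda_nat s"
  unfolding lambda_nat_def by (intro summable_sums summable_inverse_odd_real_power)

lemma sums_swap_abs_summable:
  fixes f :: "nat \<Rightarrow> nat \<Rightarrow> real"
  assumes abs_rows: "\<And>m. summable (\<lambda>n. \<bar>f m n\<bar>)"
    and abs_total: "summable (\<lambda>m. \<Sum>n. \<bar>f m n\<bar>)"
    and rows: "\<And>m. (\<lambda>n. f m n) sums a m"
    and total: "a sums s"
  shows "(\<lambda>n. \<Sum>m. f m n) sums s"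
proof -
  define F where "F = (\<lambda>(m, n). f m n)"
  have "(\<lambda>z. norm (F z)) summable_on UNIV \<times> UNIV"
  proof (rule summable_on_SigmaI)
    show "((\<lambda>n. norm (F (m, n))) has_sum (\<Sum>n. \<bar>f m n\<bar>)) UNIV" for m
      using abs_rows[of m] by (auto simp: F_def intro: sums_nonneg_imp_has_sum summable_sums)
    show "(\<lambda>m. \<Sum>n. \<bar>f m n\<bar>) summable_on UNIV"
      using abs_total by (rule summable_nonneg_imp_summable_on) (simp add: suminf_nonneg abs_rows)
  qed simp
  then have F_summable: "F summable_on UNIV \<times> UNIV"
    by (rule summable_on_iff_abs_summable_on_real[THEN iffD2])
  have "(a has_sum infsum F (UNIV \<times> UNIV)) UNIV"
  proof (rule has_sum_SigmaD[OF has_sum_infsum[OF F_summable[unfolded UNIV_Times_UNIV[symmetric]]]])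
    show "((\<lambda>n. F (m, n)) has_sum a m) UNIV" for m
      using abs_rows rows by (auto simp: F_def intro: norm_summable_imp_has_sum)
  qed
  then have "s = infsum F (UNIV \<times> UNIV)"
    by (rule sums_unique2[OF total has_sum_imp_sums])
  then have "(F has_sum s) (UNIV \<times> UNIV)"
    using F_summable by (simp add: has_sum_infsum)
  then have swapped: "((\<lambda>(n, m). f m n) has_sum s) (UNIV \<times> UNIV)"
    by (subst (asm) has_sum_swap) (simp add: F_def)
  have columns: "((\<lambda>m. f m n) has_sum (\<Sum>m. f m n)) UNIV" for n
  proof -
    have "(\<lambda>m. f m n) summable_on UNIV"
      using swapped by (intro summable_on_SigmaD1[of "\<lambda>n m. f m n" UNIV "\<lambda>_. UNIV"])
        (auto simp: summable_on_def)
    then have "((\<lambda>m. f m n) has_sum (\<Sum>\<^sub>\<infinity>m. f m n)) UNIV"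
      by (rule has_sum_infsum)
    moreover from this have "(\<Sum>m. f m n) = (\<Sum>\<^sub>\<infinity>m. f m n)"
      by (intro sums_unique[symmetric] has_sum_imp_sums)
    ultimately show ?thesis
      by simp
  qed
  have "((\<lambda>n. \<Sum>m. f m n) has_sum s) UNIV"
    using has_sum_Sigma'[where f="\<lambda>(n, m). f m n" and A=UNIV and B="\<lambda>_. UNIV"] swapped columns
    by simp
  then show ?thesis
    by (rule has_sum_imp_sums)
qed

lemma telescope_sums_shift:
  fixes f :: "nat \<Rightarrow> 'a::real_normed_vector"
  assumes "f \<longlonglongrightarrow> 0"
  shows "(\<lambda>n. f n - f (n + m)) sums (\<Sum>i<m. f i)"
proof (induction m)
  case (Suc m)
  have "(\<lambda>n. f (n + m) - f (Suc (n + m))) sums f m"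
    using telescope_sums'[of "\<lambda>n. f (n + m)" 0] assms LIMSEQ_ignore_initial_segment by force
  from sums_add[OF Suc this] show ?case
    by (simp add: algebra_simps)
qed simp

lemma harm_sums_telescope: "(\<lambda>n. 1 / real (Suc n) - 1 / real (Suc n + k)) sums harm k"
proof -
  have "(\<lambda>n. 1 / real (Suc n)) \<longlonglongrightarrow> 0"
    using LIMSEQ_inverse_real_of_nat by (simp add: inverse_eq_divide)
  from telescope_sums_shift[OF this, of k] show ?thesis
    by (simp add: harm_altdef inverse_eq_divide)
qed

lemma sums_two_ln2: "(\<lambda>n. 2 / odd_real n - 1 / real (Suc n)) sums (2 * ln 2)"
proof -
  have "(\<lambda>n. 2 * (inverse (real (2*n+1)) - inverse (real (2*n+2)))) sums (2 * ln 2)"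
    by (intro sums_mult alternating_harmonic_series_sums')
  moreover have "2 * (inverse (real (2*n+1)) - inverse (real (2*n+2))) = 2 / odd_real n - 1 / real (Suc n)"
    for n
  proof -
    have "2 / (2 + 2 * real n) = 1 / (1 + real n)"
      by (simp add: divide_simps)
    then show ?thesis
      by (simp add: odd_real_def inverse_eq_divide right_diff_distrib add.commute)
  qed
  ultimately show ?thesis
    by simp
qed

lemma sums_odd_real_reciprocal_diff:
  "(\<lambda>n. 1 / odd_real n - 1 / (odd_real n + odd_real k)) sums (harm k / 2 + ln 2)"
proof -
  have "(\<lambda>n. (1/2) * (1 / real (Suc n) - 1 / real (Suc n + k)) + (1/2) * (2 / odd_real n - 1 / real (Suc n)))
      sums ((1/2) * harm k + (1/2) * (2 * ln 2))"
    by (intro sums_add sums_mult harm_sums_telescope sums_two_ln2)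
  moreover have "(1/2) * (1 / real (Suc n) - 1 / real (Suc n + k)) + (1/2) * (2 / odd_real n - 1 / real (Suc n))
      = 1 / odd_real n - 1 / (odd_real n + odd_real k)" for n
  proof -
    have "1 / (odd_real n + odd_real k) = (1/2) * (1 / real (Suc n + k))"
      by (simp add: odd_real_def field_simps)
    then show ?thesis
      by (simp add: algebra_simps)
  qed
  ultimately show ?thesis
    by simp
qed

lemma partial_fraction_power:
  fixes x y :: real
  assumes "x > 0" "y > 0"
  shows "1 / ((x + y) * x ^ p) = (\<Sum>i<p. (-1)^i / (y^(i+1) * x^(p-i))) + (-1)^p / (y^p * (x + y))"
proof (induction p)
  case (Suc p)
  have "(\<Sum>i<p. (-1)^i / (y^(i+1) * x^(p-i))) / x = (\<Sum>i<p. (-1)^i / (y^(i+1) * x^(Suc p-i)))"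
    unfolding sum_divide_distrib by (intro sum.cong refl) (simp add: Suc_diff_le less_imp_le)
  moreover have "(-1)^p / (y^p * (x + y)) / x
      = (-1)^p / (y^(p+1) * x^(Suc p - p)) + (-1)^Suc p / (y^Suc p * (x + y))"
  proof -
    have split: "1 / (x * (x + y)) = 1 / (y * x) - 1 / (y * (x + y))"
      using assms by (simp add: divide_simps)
    have "(-1)^p / (y^p * (x + y)) / x = (-1)^p / y^p * (1 / (x * (x + y)))"
      by simp
    also have "\<dots> = (-1)^p / y^p * (1 / (y * x)) - (-1)^p / y^p * (1 / (y * (x + y)))"
      unfolding split by (rule right_diff_distrib)
    finally show ?thesis
      by (simp add: mult_ac)
  qed
  moreover have "1 / ((x + y) * x ^ Suc p) = 1 / ((x + y) * x ^ p) / x"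
    by simp
  ultimately show ?case
    unfolding Suc by (simp add: add_divide_distrib)
qed simp

lemma partial_fraction_odd_power:
  fixes x y :: real
  assumes "x > 0" "y > 0" "odd p" "p \<ge> 3"
  shows "1 / ((x + y) * x ^ p) = 1 / (y * x ^ p) + (\<Sum>i\<in>{1..<p-1}. (-1)^i / (y^(i+1) * x^(p-i)))
           + (1 / y^p) * (1 / x - 1 / (x + y))"
proof -
  have "{..<p} = insert 0 (insert (p-1) {1..<p-1})" "y * y^(p-1) = y^p"
    using assms by (auto simp flip: power_Suc)
  then have "(\<Sum>i<p. (-1)^i / (y^(i+1) * x^(p-i)))
      = 1 / (y * x^p) + (-1)^(p-1) / (y^p * x) + (\<Sum>i\<in>{1..<p-1}. (-1)^i / (y^(i+1) * x^(p-i)))"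
    using assms by simp
  moreover have "(-1::real)^(p-1) = 1" "(-1::real)^p = -1"
    using assms by simp_all
  ultimately show ?thesis
    using partial_fraction_power[OF assms(1,2), of p] by (simp add: right_diff_distrib)
qed

lemma sum_inverse_power_products:
  fixes A B :: real
  assumes "A \<noteq> 0" "B \<noteq> 0" "A \<noteq> B"
  shows "(\<Sum>j<M. 1 / (A^(j+1) * B^(M-j))) = 1 / ((A - B) * B^M) + 1 / ((B - A) * A^M)"
proof (induction M)
  case 0
  show ?case
    using assms by (simp add: divide_simps)
next
  case (Suc M)
  have "(\<Sum>j<Suc M. 1 / (A^(j+1) * B^(Suc M-j)))
      = (\<Sum>j<M. 1 / (A^(j+1) * B^(M-j))) / B + 1 / (A^(M+1) * B)"
    unfolding sum_divide_distrib by (simp add: Suc_diff_le less_imp_le mult_ac)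
  also have "\<dots> = 1 / ((A - B) * B^Suc M) + 1 / ((B - A) * A^Suc M)"
    unfolding Suc using assms by (simp add: divide_simps) (simp add: algebra_simps)
  finally show ?case .
qed

lemma odd_real_sq_diff: "odd_real c ^ 2 - odd_real a ^ 2 = 4 * (real c - real a) * (real c + real a + 1)"
  by (simp add: odd_real_def power2_eq_square algebra_simps)

lemma inverse_odd_real_sq_diff_eq:
  assumes "c \<noteq> a"
  shows "1 / (odd_real c ^ 2 - odd_real a ^ 2)
           = 1 / (4 * odd_real a) * (1 / (real c - real a) - 1 / (real c + real a + 1))"
proof -
  define u where "u = real c - real a"
  define w where "w = real c + real a + 1"
  have "u \<noteq> 0" "w \<noteq> 0" "w - u \<noteq> 0"
    using assms by (auto simp: u_def w_def)
  moreover have "odd_real a = w - u"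
    by (simp add: odd_real_def u_def w_def)
  moreover have "odd_real c ^ 2 - odd_real a ^ 2 = 4 * u * w"
    unfolding odd_real_sq_diff u_def w_def by simp
  ultimately show ?thesis
    unfolding u_def[symmetric] w_def[symmetric] by (simp add: field_simps)
qed

lemma divide_diff_commute: "a / (p - q) = - (a / (q - p :: 'a::field))"
  by (metis minus_diff_eq minus_divide_right)

lemma harm_add: "harm (a + m) = (harm a :: real) + (\<Sum>c<m. 1 / real (a + c + 1))"
  by (induction m) (simp_all add: harm_Suc inverse_eq_divide)

text \<open>The terms with \<open>c > a\<close> telescope to a harmonic number, the finitely many with \<open>c < a\<close>
  to another one, and the two differ by the single term \<open>1 / (2 a + 1)\<close>.\<close>
lemma sums_inverse_odd_real_sq_diff:
  "(\<lambda>c. if c = a then 0 else 1 / (odd_real c ^ 2 - odd_real a ^ 2)) sums (1 / (4 * odd_real a ^ 2))"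
proof -
  define f where "f c = (if c = a then 0 else 1 / (odd_real c ^ 2 - odd_real a ^ 2))" for c
  define k where "k = 1 / (4 * odd_real a)"
  have "f (d + Suc a) = k * (1 / real (Suc d) - 1 / real (Suc d + (2*a+1)))" for d
    using inverse_odd_real_sq_diff_eq[of "d + Suc a" a] by (simp add: f_def k_def add_ac)
  then have tail: "(\<lambda>d. f (d + Suc a)) sums (k * harm (2*a+1))"
    using sums_mult[OF harm_sums_telescope, of k "2*a+1"] by simp
  have below: "(\<Sum>c<a. 1 / (real c - real a)) = - harm a"
  proof -
    have "(\<Sum>c<a. 1 / (real c - real a)) = (\<Sum>c<a. - (1 / real (Suc (a - Suc c))))"
      by (intro sum.cong refl) (auto simp: of_nat_diff intro: divide_diff_commute)
    also have "\<dots> = (\<Sum>c<a. - (1 / real (Suc c)))"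
      by (rule sum.nat_diff_reindex)
    finally show ?thesis
      by (simp add: harm_altdef sum_negf inverse_eq_divide)
  qed
  have above: "(\<Sum>c<a. 1 / (real c + real a + 1)) = harm (2*a) - harm a"
    using harm_add[of a a] by (simp add: mult_2 add_ac)
  have "(\<Sum>c<Suc a. f c) = (\<Sum>c<a. k * (1 / (real c - real a) - 1 / (real c + real a + 1)))"
    by (auto simp: f_def k_def inverse_odd_real_sq_diff_eq intro!: sum.cong)
  also have "\<dots> = k * ((\<Sum>c<a. 1 / (real c - real a)) - (\<Sum>c<a. 1 / (real c + real a + 1)))"
    by (simp add: sum_distrib_left sum_subtractf right_diff_distrib)
  also have "\<dots> = - k * harm (2*a)"
    unfolding below above by simp
  finally have "f sums (k * harm (2*a+1) - k * harm (2*a))"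
    using tail sums_iff_shift[of f "Suc a"] by simp
  also have "k * harm (2*a+1) - k * harm (2*a) = 1 / (4 * odd_real a ^ 2)"
  proof -
    have "harm (Suc (2*a)) = harm (2*a) + 1 / odd_real a"
      by (simp add: harm_Suc odd_real_def inverse_eq_divide add.commute)
    then show ?thesis
      by (simp add: k_def power2_eq_square algebra_simps)
  qed
  finally show ?thesis
    unfolding f_def .
qed

lemma odd_real_sq_diff_ge:
  assumes "b < a"
  shows "odd_real a ^ 2 - odd_real b ^ 2 \<ge> 4 * (real a + 1)"
proof -
  have "(real a - real b) * (real a + real b + 1) \<ge> 1 * (real a + 1)"
    using assms by (intro mult_mono) auto
  then show ?thesis
    unfolding odd_real_sq_diff by linarith
qed

lemma sum_inverse_odd_real_sq_diff_le_1: "(\<Sum>c<a. 1 / (odd_real a ^ 2 - odd_real c ^ 2)) \<le> 1"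
proof -
  have "(\<Sum>c<a. 1 / (odd_real a ^ 2 - odd_real c ^ 2)) \<le> (\<Sum>c<a. 1 / (real a + 1))"
    using odd_real_sq_diff_ge by (intro sum_mono divide_left_mono) force+
  also have "\<dots> \<le> 1"
    by simp
  finally show ?thesis .
qed

lemma sums_abs_inverse_odd_real_sq_diff:
  "(\<lambda>c. if c = a then 0 else 1 / \<bar>odd_real c ^ 2 - odd_real a ^ 2\<bar>)
     sums (1 / (4 * odd_real a ^ 2) + 2 * (\<Sum>c<a. 1 / (odd_real a ^ 2 - odd_real c ^ 2)))"
proof -
  have "(\<lambda>c. (if c = a then 0 else 1 / (odd_real c ^ 2 - odd_real a ^ 2))
      + (if c \<in> {..<a} then 2 / (odd_real a ^ 2 - odd_real c ^ 2) else 0))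
      sums (1 / (4 * odd_real a ^ 2) + (\<Sum>c<a. 2 / (odd_real a ^ 2 - odd_real c ^ 2)))"
    by (intro sums_add sums_inverse_odd_real_sq_diff sums_If_finite_set) simp
  moreover have "(if c = a then 0 else 1 / (odd_real c ^ 2 - odd_real a ^ 2))
      + (if c \<in> {..<a} then 2 / (odd_real a ^ 2 - odd_real c ^ 2) else 0)
      = (if c = a then 0 else 1 / \<bar>odd_real c ^ 2 - odd_real a ^ 2\<bar>)" for c
    using odd_real_sq_diff_ge[of c a] odd_real_sq_diff_ge[of a c]
      divide_diff_commute[of 1 "odd_real c ^ 2" "odd_real a ^ 2"]
    by (cases c a rule: linorder_cases) auto
  moreover have "(\<Sum>c<a. 2 / (odd_real a ^ 2 - odd_real c ^ 2))
      = 2 * (\<Sum>c<a. 1 / (odd_real a ^ 2 - odd_real c ^ 2))"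
    by (simp add: sum_distrib_left)
  ultimately show ?thesis
    by simp
qed

definition sq_diff_kernel :: "nat \<Rightarrow> nat \<Rightarrow> nat \<Rightarrow> real" where
  "sq_diff_kernel M a b =
     (if a = b then 0 else 1 / ((odd_real a ^ 2 - odd_real b ^ 2) * odd_real b ^ (2*M)))"

lemma sums_sq_diff_kernel: "(\<lambda>a. sq_diff_kernel M a b) sums (1 / (4 * odd_real b ^ (2*M+2)))"
proof -
  have "(\<lambda>a. sq_diff_kernel M a b)
      = (\<lambda>a. (if a = b then 0 else 1 / (odd_real a ^ 2 - odd_real b ^ 2)) * (1 / odd_real b ^ (2*M)))"
    by (auto simp: sq_diff_kernel_def)
  moreover have "1 / (4 * odd_real b ^ (2*M+2)) = 1 / (4 * odd_real b ^ 2) * (1 / odd_real b ^ (2*M))"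
    by (simp add: power_add power2_eq_square mult_ac)
  ultimately show ?thesis
    by (simp only:) (intro sums_mult2 sums_inverse_odd_real_sq_diff)
qed

lemma summable_abs_sq_diff_kernel:
  assumes "M \<ge> 1"
  shows "summable (\<lambda>a. \<bar>sq_diff_kernel M a b\<bar>)"
    and "summable (\<lambda>b. \<Sum>a. \<bar>sq_diff_kernel M a b\<bar>)"
proof -
  define D where "D b = 1 / (4 * odd_real b ^ 2) + 2 * (\<Sum>c<b. 1 / (odd_real b ^ 2 - odd_real c ^ 2))"
    for b
  have D_bounds: "0 \<le> D b" "D b \<le> 3" for b
  proof -
    have "0 \<le> (\<Sum>c<b. 1 / (odd_real b ^ 2 - odd_real c ^ 2))"
    proof (rule sum_nonneg)
      fix c assume "c \<in> {..<b}"
      then show "0 \<le> 1 / (odd_real b ^ 2 - odd_real c ^ 2)"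
        using odd_real_sq_diff_ge[of c b] by simp
    qed
    moreover have "1 \<le> odd_real b ^ 2"
      using odd_real_ge_1 by (rule one_le_power)
    then have "1 / (4 * odd_real b ^ 2) \<le> 1"
      by (simp add: divide_le_eq)
    moreover have "0 \<le> 1 / (4 * odd_real b ^ 2)"
      by simp
    ultimately show "0 \<le> D b" "D b \<le> 3"
      using sum_inverse_odd_real_sq_diff_le_1[of b] unfolding D_def by linarith+
  qed
  have abs_eq: "\<bar>sq_diff_kernel M a b\<bar>
      = (if a = b then 0 else 1 / \<bar>odd_real a ^ 2 - odd_real b ^ 2\<bar>) * (1 / odd_real b ^ (2*M))" for a b
    by (simp add: sq_diff_kernel_def abs_mult)
  have rows: "(\<lambda>a. \<bar>sq_diff_kernel M a b\<bar>) sums (D b * (1 / odd_real b ^ (2*M)))" for b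
    unfolding abs_eq D_def by (intro sums_mult2 sums_abs_inverse_odd_real_sq_diff)
  then show "summable (\<lambda>a. \<bar>sq_diff_kernel M a b\<bar>)"
    by (rule sums_summable)
  have "summable (\<lambda>b. D b * (1 / odd_real b ^ (2*M)))"
  proof (rule summable_comparison_test)
    show "summable (\<lambda>b. 3 * (1 / odd_real b ^ (2*M)))"
      using assms by (intro summable_mult summable_inverse_odd_real_power) simp
  qed (use D_bounds in \<open>auto intro!: exI[of _ 0] divide_right_mono\<close>)
  then show "summable (\<lambda>b. \<Sum>a. \<bar>sq_diff_kernel M a b\<bar>)"
    using rows by (simp add: sums_iff)
qed

lemma sums_sq_diff_kernel_swapped:
  assumes "M \<ge> 1"
  shows "(\<lambda>a. \<Sum>b. sq_diff_kernel M a b) sums (lambda_nat (2*M+2) / 4)"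
proof (rule sums_swap_abs_summable[where f="\<lambda>b a. sq_diff_kernel M a b"])
  show "(\<lambda>b. 1 / (4 * odd_real b ^ (2*M+2))) sums (lambda_nat (2*M+2) / 4)"
    using sums_divide[OF sums_lambda_nat, of "2*M+2" 4] by (simp add: mult_ac)
qed (use summable_abs_sq_diff_kernel[OF assms] sums_sq_diff_kernel in auto)

lemma sum_odd_real_power_products_eq:
  "(\<Sum>j<M. 1 / (odd_real b ^ (2*j+2) * odd_real a ^ (2*(M-j))))
     = sq_diff_kernel M b a + sq_diff_kernel M a b + (if b = a then real M / odd_real a ^ (2*M+2) else 0)"
proof (cases "b = a")
  case True
  have "odd_real a ^ (2*j+2) * odd_real a ^ (2*(M-j)) = odd_real a ^ (2*M+2)" if "j < M" for j
  proof -
    have "2*j+2 + 2*(M-j) = 2*M+2"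
      using that by simp
    then show ?thesis
      by (metis power_add)
  qed
  then have "(\<Sum>j<M. 1 / (odd_real a ^ (2*j+2) * odd_real a ^ (2*(M-j))))
      = (\<Sum>j<M. 1 / odd_real a ^ (2*M+2))"
    by (intro sum.cong refl) (metis lessThan_iff)
  then show ?thesis
    using True by (simp add: sq_diff_kernel_def)
next
  case False
  have "odd_real b \<noteq> - odd_real a"
    using odd_real_pos[of a] odd_real_pos[of b] by linarith
  with False have "odd_real b ^ 2 \<noteq> odd_real a ^ 2"
    by (simp add: power2_eq_iff odd_real_inj)
  have "(\<Sum>j<M. 1 / (odd_real b ^ (2*j+2) * odd_real a ^ (2*(M-j))))
      = (\<Sum>j<M. 1 / ((odd_real b ^ 2) ^ (j+1) * (odd_real a ^ 2) ^ (M-j)))"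
    unfolding power_mult[symmetric] by (simp add: algebra_simps)
  also have "\<dots> = 1 / ((odd_real b ^ 2 - odd_real a ^ 2) * (odd_real a ^ 2) ^ M)
        + 1 / ((odd_real a ^ 2 - odd_real b ^ 2) * (odd_real b ^ 2) ^ M)"
    using \<open>odd_real b ^ 2 \<noteq> odd_real a ^ 2\<close> by (intro sum_inverse_power_products) simp_all
  finally show ?thesis
    using False by (simp add: sq_diff_kernel_def power_mult[symmetric])
qed

text \<open>Summing the identity above over \<open>b\<close> and then over \<open>a\<close> evaluates the off-diagonal double
  series twice: directly, and after exchanging the order of summation.\<close>
lemma lambda_nat_even_convolution:
  assumes "M \<ge> 1"
  shows "(\<Sum>j<M. lambda_nat (2*j+2) * lambda_nat (2*(M-j))) = (real M + 1/2) * lambda_nat (2*M+2)"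
proof -
  define S where "S a = (\<Sum>j<M. lambda_nat (2*j+2) * (1 / odd_real a ^ (2*(M-j))))" for a
  have row: "(\<lambda>b. sq_diff_kernel M a b) sums (S a - (real M + 1/4) * (1 / odd_real a ^ (2*M+2)))" for a
  proof -
    have "(\<lambda>b. (\<Sum>j<M. 1 / (odd_real b ^ (2*j+2) * odd_real a ^ (2*(M-j)))) - sq_diff_kernel M b a
        - (if b = a then real M / odd_real a ^ (2*M+2) else 0))
        sums (S a - 1 / (4 * odd_real a ^ (2*M+2)) - real M / odd_real a ^ (2*M+2))"
    proof (intro sums_diff sums_sq_diff_kernel)
      show "(\<lambda>b. \<Sum>j<M. 1 / (odd_real b ^ (2*j+2) * odd_real a ^ (2*(M-j)))) sums S a"
        unfolding S_def
      proof (rule sums_sum)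
        fix j
        show "(\<lambda>b. 1 / (odd_real b ^ (2*j+2) * odd_real a ^ (2*(M-j))))
            sums (lambda_nat (2*j+2) * (1 / odd_real a ^ (2*(M-j))))"
          using sums_mult2[OF sums_lambda_nat[of "2*j+2"], of "1 / odd_real a ^ (2*(M-j))"] by simp
      qed
      show "(\<lambda>b. if b = a then real M / odd_real a ^ (2*M+2) else 0) sums (real M / odd_real a ^ (2*M+2))"
        using sums_single[of a "\<lambda>_. real M / odd_real a ^ (2*M+2)"] by simp
    qed
    moreover have "S a - 1 / (4 * P) - real M / P = S a - (real M + 1/4) * (1 / P)" for P :: real
      by (cases "P = 0") (simp_all add: field_simps)
    ultimately show ?thesis
      unfolding sum_odd_real_power_products_eq by simp
  qed
  have "(\<lambda>a. S a - (real M + 1/4) * (1 / odd_real a ^ (2*M+2))) sums (lambda_nat (2*M+2) / 4)"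
    using sums_sq_diff_kernel_swapped[OF assms] row by (simp add: sums_iff)
  moreover have "(\<lambda>a. S a - (real M + 1/4) * (1 / odd_real a ^ (2*M+2)))
      sums ((\<Sum>j<M. lambda_nat (2*j+2) * lambda_nat (2*(M-j))) - (real M + 1/4) * lambda_nat (2*M+2))"
    unfolding S_def by (intro sums_diff sums_sum sums_mult sums_lambda_nat) auto
  ultimately show ?thesis
    by (auto dest: sums_unique2 simp: field_simps)
qed

lemma harm_le_real: "harm n \<le> real n"
proof (induction n)
  case (Suc n)
  have "inverse (real (Suc n)) \<le> 1"
    by (simp add: inverse_le_1_iff)
  with Suc show ?case
    by (simp add: harm_Suc)
qed (simp add: harm_altdef)

lemma summable_harm_div_odd_real_power:
  assumes "p \<ge> 3"
  shows "summable (\<lambda>n. harm n / odd_real n ^ p)"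
proof (rule summable_comparison_test[OF _ summable_inverse_odd_real_power[of "p-1"]])
  have "harm n / odd_real n ^ p \<le> 1 / odd_real n ^ (p-1)" for n
  proof -
    have "harm n \<le> odd_real n"
      using harm_le_real[of n] by (simp add: odd_real_def)
    then have "harm n / odd_real n ^ p \<le> odd_real n / odd_real n ^ p"
      by (intro divide_right_mono) (auto intro: less_imp_le)
    also have "\<dots> = 1 / odd_real n ^ (p-1)"
      using assms by (cases p) simp_all
    finally show ?thesis .
  qed
  then show "\<exists>N. \<forall>n\<ge>N. norm (harm n / odd_real n ^ p) \<le> 1 / odd_real n ^ (p-1)"
    by (simp add: harm_nonneg abs_of_pos)
qed (use assms in simp)

lemma harm_tail_partial_fractions:
  assumes "odd p" "p \<ge> 3"
  shows "(1 / real (Suc k) - 1 / real (Suc k + n)) / odd_real n ^ p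
    = (1 / real (Suc k) - 2 / odd_real k) * (1 / odd_real n ^ p)
      - 2 * (\<Sum>i\<in>{1..<p-1}. (-1)^i * (1 / odd_real k ^ (i+1)) * (1 / odd_real n ^ (p-i)))
      - 2 / odd_real k ^ p * (1 / odd_real n - 1 / (odd_real n + odd_real k))"
proof -
  define x where "x = odd_real n"
  define y where "y = odd_real k"
  have "x > 0" "y > 0"
    by (simp_all add: x_def y_def)
  have "1 / real (Suc k + n) / x ^ p = 2 * (1 / ((x + y) * x ^ p))"
  proof -
    have "x + y = 2 * real (Suc k + n)"
      by (simp add: x_def y_def odd_real_def)
    moreover have "1 / a / X = 2 * (1 / ((2 * a) * X))" for a X :: real
      by (cases "a * X = 0") (simp_all add: field_simps)
    ultimately show ?thesis
      by presburger
  qed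
  then have "(1 / real (Suc k) - 1 / real (Suc k + n)) / x ^ p
      = 1 / real (Suc k) / x ^ p - 2 * (1 / (y * x ^ p)
        + (\<Sum>i\<in>{1..<p-1}. (-1)^i / (y^(i+1) * x^(p-i))) + (1 / y^p) * (1 / x - 1 / (x + y)))"
    unfolding partial_fraction_odd_power[OF \<open>x > 0\<close> \<open>y > 0\<close> assms, symmetric]
    by (simp add: diff_divide_distrib)
  also have "\<dots> = (1 / real (Suc k) - 2 / y) * (1 / x ^ p)
      - 2 * (\<Sum>i\<in>{1..<p-1}. (-1)^i * (1 / y ^ (i+1)) * (1 / x ^ (p-i)))
      - 2 / y ^ p * (1 / x - 1 / (x + y))"
    by (simp add: algebra_simps)
  finally show ?thesis
    by (simp add: x_def y_def)
qed

lemma sums_harm_tail_div_odd_real_power: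
  assumes "odd p" "p \<ge> 3"
  shows "(\<lambda>n. (1 / real (Suc k) - 1 / real (Suc k + n)) / odd_real n ^ p) sums
           ((1 / real (Suc k) - 2 / odd_real k) * lambda_nat p
            - 2 * (\<Sum>i\<in>{1..<p-1}. (-1)^i * (1 / odd_real k ^ (i+1)) * lambda_nat (p-i))
            - 2 / odd_real k ^ p * (harm k / 2 + ln 2))"
  unfolding harm_tail_partial_fractions[OF assms] using assms
  by (intro sums_diff sums_mult sums_sum sums_lambda_nat sums_odd_real_reciprocal_diff) auto

text \<open>Expanding \<open>H\<^sub>n\<close> as a telescoping series gives a double series of nonnegative terms; summing it
  in the other order, each inner series is evaluated by partial fractions in \<open>2 n + 1\<close>.\<close>
lemma sums_harm_div_odd_real_power_alternating:
  assumes "odd p" "p \<ge> 3"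
  shows "(\<lambda>n. harm n / odd_real n ^ p) sums
           (- 2 * ln 2 * lambda_nat p - (\<Sum>i\<in>{1..<p-1}. (-1)^i * lambda_nat (i+1) * lambda_nat (p-i)))"
proof -
  define T where "T = (\<Sum>n. harm n / odd_real n ^ p)"
  define \<Sigma> where "\<Sigma> = (\<Sum>i\<in>{1..<p-1}. (-1)^i * lambda_nat (i+1) * lambda_nat (p-i))"
  define t where "t n k = (1 / real (Suc k) - 1 / real (Suc k + n)) / odd_real n ^ p" for n k
  define R where "R k = (1 / real (Suc k) - 2 / odd_real k) * lambda_nat p
      - 2 * (\<Sum>i\<in>{1..<p-1}. (-1)^i * (1 / odd_real k ^ (i+1)) * lambda_nat (p-i))
      - 2 / odd_real k ^ p * (harm k / 2 + ln 2)" for k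
  have T: "(\<lambda>n. harm n / odd_real n ^ p) sums T"
    unfolding T_def using assms by (intro summable_sums summable_harm_div_odd_real_power)
  have t_nonneg: "t n k \<ge> 0" for n k
  proof -
    have "1 / real (Suc k + n) \<le> 1 / real (Suc k)"
      by (intro divide_left_mono) auto
    then show ?thesis
      unfolding t_def by (intro divide_nonneg_nonneg) (auto intro: less_imp_le)
  qed
  have rows: "(\<lambda>k. t n k) sums (harm n / odd_real n ^ p)" for n
    unfolding t_def by (intro sums_divide harm_sums_telescope)
  have columns: "(\<lambda>n. t n k) sums R k" for k
    unfolding t_def R_def by (rule sums_harm_tail_div_odd_real_power[OF assms])
  have "(\<lambda>k. \<Sum>n. t n k) sums T"
    using rows T t_nonneg by (intro sums_swap_abs_summable) (auto simp: sums_iff)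
  then have "R sums T"
    using columns by (simp add: sums_iff)
  moreover have "R sums (- 2 * ln 2 * lambda_nat p - 2 * \<Sigma> - (T + 2 * ln 2 * lambda_nat p))"
    unfolding R_def
  proof (intro sums_diff)
    show "(\<lambda>k. (1 / real (Suc k) - 2 / odd_real k) * lambda_nat p) sums (- 2 * ln 2 * lambda_nat p)"
      using sums_mult2[OF sums_minus[OF sums_two_ln2], of "lambda_nat p"] by simp
    show "(\<lambda>k. 2 * (\<Sum>i\<in>{1..<p-1}. (-1)^i * (1 / odd_real k ^ (i+1)) * lambda_nat (p-i))) sums (2 * \<Sigma>)"
      unfolding \<Sigma>_def
    proof (intro sums_mult sums_sum)
      fix i assume "i \<in> {1..<p-1}"
      then have "(\<lambda>k. ((-1)^i * lambda_nat (p-i)) * (1 / odd_real k ^ (i+1)))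
          sums (((-1)^i * lambda_nat (p-i)) * lambda_nat (i+1))"
        by (intro sums_mult sums_lambda_nat) auto
      then show "(\<lambda>k. (-1)^i * (1 / odd_real k ^ (i+1)) * lambda_nat (p-i))
          sums ((-1)^i * lambda_nat (i+1) * lambda_nat (p-i))"
        by (simp add: mult_ac)
    qed
    have "(\<lambda>k. 2 / odd_real k ^ p * (harm k / 2 + ln 2))
        = (\<lambda>k. harm k / odd_real k ^ p + 2 * ln 2 * (1 / odd_real k ^ p))"
      by (rule ext) (simp add: field_simps)
    then show "(\<lambda>k. 2 / odd_real k ^ p * (harm k / 2 + ln 2)) sums (T + 2 * ln 2 * lambda_nat p)"
      using assms by (simp only:) (intro sums_add T sums_mult sums_lambda_nat, simp)
  qed
  ultimately have "T = - 2 * ln 2 * lambda_nat p - \<Sigma>"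
    by (auto dest: sums_unique2 simp: algebra_simps)
  with T show ?thesis
    by (simp add: \<Sigma>_def)
qed

lemma sums_harm_div_odd_real_power:
  assumes "M \<ge> 1"
  shows "(\<lambda>n. harm n / odd_real n ^ (2*M+1)) sums
           (- 2 * ln 2 * lambda_nat (2*M+1) + (real M + 1/2) * lambda_nat (2*M+2)
            - (\<Sum>j\<in>{1..<M}. lambda_nat (2*j+1) * lambda_nat (2*M+1-2*j)))"
proof -
  define g where "g i = (-1)^i * lambda_nat (i+1) * lambda_nat (2*M+1-i)" for i
  have "(\<Sum>i<2*M. g i) = (\<Sum>j<M. g (2*j)) + (\<Sum>j<M. g (2*j+1))"
    using sum_split_even_odd[of g g M] by simp
  moreover have "(\<Sum>i<2*M. g i) = g 0 + (\<Sum>i\<in>{1..<2*M}. g i)"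
    using assms by (simp add: lessThan_atLeast0 sum.atLeast_Suc_lessThan)
  moreover have "(\<Sum>j<M. g (2*j)) = g 0 + (\<Sum>j\<in>{1..<M}. lambda_nat (2*j+1) * lambda_nat (2*M+1-2*j))"
    using assms by (simp add: lessThan_atLeast0 sum.atLeast_Suc_lessThan g_def)
  moreover have "(\<Sum>j<M. g (2*j+1)) = - (\<Sum>j<M. lambda_nat (2*j+2) * lambda_nat (2*(M-j)))"
    unfolding sum_negf[symmetric] by (intro sum.cong refl) (simp add: g_def diff_mult_distrib2)
  ultimately have alternating: "(\<Sum>i\<in>{1..<2*M}. g i)
      = (\<Sum>j\<in>{1..<M}. lambda_nat (2*j+1) * lambda_nat (2*M+1-2*j)) - (real M + 1/2) * lambda_nat (2*M+2)"
    using lambda_nat_even_convolution[OF assms] by simp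
  have "(\<lambda>n. harm n / odd_real n ^ (2*M+1)) sums (- 2 * ln 2 * lambda_nat (2*M+1) - (\<Sum>i\<in>{1..<2*M}. g i))"
    using sums_harm_div_odd_real_power_alternating[of "2*M+1"] assms by (simp add: g_def)
  then show ?thesis
    unfolding alternating by (simp add: algebra_simps)
qed

lemma sum_symmetric_halves:
  fixes g :: "nat \<Rightarrow> 'a::comm_semiring_1"
  assumes "b \<ge> 1" and sym: "\<And>j. j \<le> 2*b \<Longrightarrow> g (2*b - j) = g j"
  shows "(\<Sum>j\<in>{1..<2*b}. g j) = g b + 2 * (\<Sum>j\<in>{1..<b}. g j)"
proof -
  have "(\<Sum>j\<in>{1..<2*b}. g j) = (\<Sum>j\<in>{1..<b}. g j) + (\<Sum>j\<in>{b..<2*b}. g j)"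
    using assms(1) by (simp add: sum.atLeastLessThan_concat)
  also have "(\<Sum>j\<in>{b..<2*b}. g j) = g b + (\<Sum>j\<in>{Suc b..<2*b}. g j)"
    using assms(1) by (simp add: sum.atLeast_Suc_lessThan)
  also have "(\<Sum>j\<in>{Suc b..<2*b}. g j) = (\<Sum>j\<in>{1..<b}. g j)"
    by (rule sum.reindex_bij_witness[of _ "\<lambda>j. 2*b - j" "\<lambda>j. 2*b - j"]) (auto simp: sym)
  finally show ?thesis
    by (simp add: mult_2 ac_simps)
qed

lemma sum_lambda_nat_odd_products_fold:
  assumes "b \<ge> 1"
  shows "(\<Sum>j\<in>{1..<2*b}. lambda_nat (2*j+1) * lambda_nat (2*(2*b)+1-2*j))
           = (lambda_nat (2*b+1))\<^sup>2 + 2 * (\<Sum>q\<in>{1..<b}. lambda_nat (2*q+1) * lambda_nat (4*b-2*q+1))"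
proof -
  define g where "g j = lambda_nat (2*j+1) * lambda_nat (2*(2*b)+1-2*j)" for j
  have "(\<Sum>j\<in>{1..<2*b}. g j) = g b + 2 * (\<Sum>j\<in>{1..<b}. g j)"
  proof (rule sum_symmetric_halves[OF assms])
    fix j assume "j \<le> 2*b"
    then have "2*(2*b-j)+1 = 2*(2*b)+1-2*j" "2*(2*b)+1-2*(2*b-j) = 2*j+1"
      by auto
    then show "g (2*b - j) = g j"
      by (simp add: g_def mult.commute)
  qed
  moreover have "g b = (lambda_nat (2*b+1))\<^sup>2"
    by (simp add: g_def power2_eq_square)
  moreover have "(\<Sum>j\<in>{1..<b}. g j) = (\<Sum>q\<in>{1..<b}. lambda_nat (2*q+1) * lambda_nat (4*b-2*q+1))"
    by (auto simp: g_def intro!: sum.cong arg_cong[where f=lambda_nat])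
  ultimately show ?thesis
    by (simp add: g_def)
qed

theorem mainTheorem5:
  fixes b :: nat
  assumes "b \<ge> 1"
  shows "(\<lambda>m. harm (Suc m) / (2 * real (Suc m) + 1) ^ (4 * b + 1)) sums
           (- 2 * dlambda (4 * b + 1) * ln 2
            + (2 * real b + 1 / 2) * dlambda (4 * b + 2)
            - (dlambda (2 * b + 1))\<^sup>2
            - 2 * (\<Sum>q = 1..b - 1. dlambda (2 * q + 1) * dlambda (4 * b - 2 * q + 1)))"
proof -
  have "(\<lambda>n. harm n / odd_real n ^ (4*b+1)) sums
      (- 2 * lambda_nat (4*b+1) * ln 2 + (2 * real b + 1/2) * lambda_nat (4*b+2)
       - (lambda_nat (2*b+1))\<^sup>2 - 2 * (\<Sum>q\<in>{1..<b}. lambda_nat (2*q+1) * lambda_nat (4*b-2*q+1)))"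
    using sums_harm_div_odd_real_power[of "2*b"] sum_lambda_nat_odd_products_fold[OF assms] assms
    by (simp add: algebra_simps)
  then have "(\<lambda>m. harm (Suc m) / odd_real (Suc m) ^ (4*b+1)) sums
      (- 2 * lambda_nat (4*b+1) * ln 2 + (2 * real b + 1/2) * lambda_nat (4*b+2)
       - (lambda_nat (2*b+1))\<^sup>2 - 2 * (\<Sum>q\<in>{1..<b}. lambda_nat (2*q+1) * lambda_nat (4*b-2*q+1)))"
    by (subst sums_Suc_iff) (simp add: harm_expand(1))
  moreover have "{1..b-1} = {1..<b}"
    using assms by auto
  ultimately show ?thesis
    unfolding dlambda_of_nat odd_real_def by simp
qed

end
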